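(* Let $R$ be a commutative ring with ${\rm char}(R)\neq 2$ and $R_2\neq\{0\}$, let $G$ be a group with involution $\varphi$, and assume $(RG)^-_\varphi$ is commutative. Let $g,h\in G$ with $(g,h)\neq 1$. \begin{enumerate} \item If $g\in G_\varphi$ and $h\notin G_\varphi$, then $gh=\varphi(h)g$ and $hg=g\varphi(h)$. \item If $g,h\in G\setminus G_\varphi$, then $gh\notin G_\varphi$. \item If $g,h\in G\setminus G_\varphi$, then ${\rm char}(R)=4$, the subgroup $\langle g,h\rangle$ has the LC-property and has a unique non-trivial commutator, and $\varphi(g)=(g,h)g$ and $\varphi(h)=(g,h)h$. In particular, if ${\rm char}(R)\neq 4$ then $K=\langle x\in G\mid x\notin G_\varphi\rangle$ is abelian. \end{enumerate}
   Context: An involution on a group $G$ is a map $\varphi:G\to G$ with $\varphi(gh)=\varphi(h)\varphi(g)$ and $\varphi^2=\mathrm{id}$, extended $R$-linearly to $RG$. $G_\varphi=\{g\in G\mid\varphi(g)=g\}$; $(RG)^-_\varphi=\{\alpha\in RG\mid\varphi(\alpha)=-\alpha\}$; $R_2=\{r\in R\mid 2r=0\}$. The group commutator is $(g,h)=ghg^{-1}h^{-1}$. A group $H$ has the LC (lack of commutativity) property if for all $a,b\in H$: $ab=ba$ if and only if $a\in Z(H)$ or $b\in Z(H)$ or $ab\in Z(H)$. "Unique non-trivial commutator" means the set $\{(a,b)\mid a,b\in H\}$ has exactly one element different from $1$. *)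

theory Defs
  imports "HOL-Algebra.Algebra"
begin

definition group_involution :: "('g, 'b) monoid_scheme \<Rightarrow> ('g \<Rightarrow> 'g) \<Rightarrow> bool" where
  "group_involution G \<phi> \<longleftrightarrow>
     (\<forall>g \<in> carrier G. \<phi> g \<in> carrier G) \<and>
     (\<forall>g \<in> carrier G. \<forall>h \<in> carrier G. \<phi> (g \<otimes>\<^bsub>G\<^esub> h) = \<phi> h \<otimes>\<^bsub>G\<^esub> \<phi> g) \<and>
     (\<forall>g \<in> carrier G. \<phi> (\<phi> g) = g)"

definition group_ring :: "('g, 'b) monoid_scheme \<Rightarrow> ('g \<Rightarrow> 'r::comm_ring_1) set" where
  "group_ring G = {\<alpha>. finite {x. \<alpha> x \<noteq> 0} \<and> {x. \<alpha> x \<noteq> 0} \<subseteq> carrier G}"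

definition gr_mult :: "('g, 'b) monoid_scheme \<Rightarrow> ('g \<Rightarrow> 'r::comm_ring_1) \<Rightarrow> ('g \<Rightarrow> 'r) \<Rightarrow> ('g \<Rightarrow> 'r)" where
  "gr_mult G \<alpha> \<beta> = (\<lambda>x. \<Sum>(y, z) \<in> {(y, z). y \<in> carrier G \<and> z \<in> carrier G \<and> \<alpha> y \<noteq> 0 \<and> \<beta> z \<noteq> 0
                                        \<and> y \<otimes>\<^bsub>G\<^esub> z = x}. \<alpha> y * \<beta> z)"

text \<open>R-linear extension of \<phi> to RG: \<phi>(\<Sum> a_g g) = \<Sum> a_g \<phi>(g), so the coefficient at x is a_{\<phi>(x)}.\<close>
definition gr_inv_ext :: "('g, 'b) monoid_scheme \<Rightarrow> ('g \<Rightarrow> 'g) \<Rightarrow> ('g \<Rightarrow> 'r::comm_ring_1) \<Rightarrow> ('g \<Rightarrow> 'r)" where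
  "gr_inv_ext G \<phi> \<alpha> = (\<lambda>x. if x \<in> carrier G then \<alpha> (\<phi> x) else 0)"

definition gr_skew :: "('g, 'b) monoid_scheme \<Rightarrow> ('g \<Rightarrow> 'g) \<Rightarrow> ('g \<Rightarrow> 'r::comm_ring_1) set" where
  "gr_skew G \<phi> = {\<alpha> \<in> group_ring G. gr_inv_ext G \<phi> \<alpha> = (\<lambda>x. - \<alpha> x)}"

definition fixed_elems :: "('g, 'b) monoid_scheme \<Rightarrow> ('g \<Rightarrow> 'g) \<Rightarrow> 'g set" where
  "fixed_elems G \<phi> = {g \<in> carrier G. \<phi> g = g}"

definition grp_comm :: "('g, 'b) monoid_scheme \<Rightarrow> 'g \<Rightarrow> 'g \<Rightarrow> 'g" where
  "grp_comm G g h = g \<otimes>\<^bsub>G\<^esub> h \<otimes>\<^bsub>G\<^esub> inv\<^bsub>G\<^esub> g \<otimes>\<^bsub>G\<^esub> inv\<^bsub>G\<^esub> h"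

definition sub_center :: "('g, 'b) monoid_scheme \<Rightarrow> 'g set \<Rightarrow> 'g set" where
  "sub_center G H = {z \<in> H. \<forall>x \<in> H. z \<otimes>\<^bsub>G\<^esub> x = x \<otimes>\<^bsub>G\<^esub> z}"

definition LC_property :: "('g, 'b) monoid_scheme \<Rightarrow> 'g set \<Rightarrow> bool" where
  "LC_property G H \<longleftrightarrow> (\<forall>a \<in> H. \<forall>b \<in> H.
      a \<otimes>\<^bsub>G\<^esub> b = b \<otimes>\<^bsub>G\<^esub> a \<longleftrightarrow>
      (a \<in> sub_center G H \<or> b \<in> sub_center G H \<or> a \<otimes>\<^bsub>G\<^esub> b \<in> sub_center G H))"

definition unique_nontrivial_commutator :: "('g, 'b) monoid_scheme \<Rightarrow> 'g set \<Rightarrow> bool" where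
  "unique_nontrivial_commutator G H \<longleftrightarrow>
     (\<exists>!c. c \<in> {grp_comm G a b | a b. a \<in> H \<and> b \<in> H} \<and> c \<noteq> \<one>\<^bsub>G\<^esub>)"

end

theory Submission
  imports Defs
begin

(* The hypothesis is used only through two kinds of skew elements: x - phi(x) for every x in G,
   and r p for a phi-fixed p and a non-zero r with 2 r = 0.  Comparing one coefficient of the
   two products of two such elements yields group relations:
   - (r p)(q - phi q) = (q - phi q)(r p) gives part 1, p q = phi(q) p and q p = p phi(q);
   - part 1 applied to the fixed element p = g h and q = g gives part 2;
   - (g - phi g)(h - phi h) = (h - phi h)(g - phi g) forces 1 + a = -b - c with a, b, c in {0, 1}
     in R, where 2 and 3 are non-zero; hence a = b = c = 1 and 4 = 0 (part 3).
   The resulting relations make the commutator c = (g, h) a central involution of <g, h> with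
   phi(g) = c g and phi(h) = c h. *)

lemma two_nonzero:
  assumes "CHAR('r::comm_ring_1) \<noteq> 2" "(1::'r) \<noteq> 0"
  shows "(2::'r) \<noteq> 0"
proof
  assume "(2::'r) = 0"
  then have dvd: "CHAR('r) dvd 2" using of_nat_eq_0_iff_char_dvd[where 'a='r, of 2] by simp
  then have "0 < CHAR('r)" "CHAR('r) \<le> 2" by (auto intro: Nat.gr0I dvd_imp_le)
  moreover have "CHAR('r) \<noteq> 1" using assms(2) CHAR_not_1 by simp
  ultimately show False using assms(1) by linarith
qed

lemma char_four:
  assumes "(4::'r::comm_ring_1) = 0" "(2::'r) \<noteq> 0"
  shows "CHAR('r) = 4"
proof -
  have dvd4: "CHAR('r) dvd 4" using assms(1) of_nat_eq_0_iff_char_dvd[where 'a='r, of 4] by simp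
  have not_dvd2: "\<not> CHAR('r) dvd 2" using assms(2) of_nat_eq_0_iff_char_dvd[where 'a='r, of 2] by simp
  have "CHAR('r) \<le> 4" using dvd4 by (rule dvd_imp_le) simp
  then have "CHAR('r) = 0 \<or> CHAR('r) = 1 \<or> CHAR('r) = 2 \<or> CHAR('r) = 3 \<or> CHAR('r) = 4"
    by arith
  with dvd4 not_dvd2 show ?thesis by auto
qed

lemma of_bool_equation:
  assumes "(2::'r::comm_ring_1) \<noteq> 0" "(3::'r) \<noteq> 0"
    and "1 + of_bool a = - of_bool b - (of_bool c :: 'r)"
  shows "a \<and> b \<and> c \<and> (4::'r) = 0"
  using assms by (cases a; cases b; cases c) (simp_all add: algebra_simps eq_neg_iff_add_eq_0)

text \<open>The centralizer of a single element; it is a subgroup, which lets us prove commutation with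
  all of a generated subgroup by checking the generators.\<close>
definition centralizer :: "('g, 'b) monoid_scheme \<Rightarrow> 'g \<Rightarrow> 'g set" where
  "centralizer G y = {x \<in> carrier G. x \<otimes>\<^bsub>G\<^esub> y = y \<otimes>\<^bsub>G\<^esub> x}"

context group begin

lemma grp_comm_carrier: "a \<in> carrier G \<Longrightarrow> b \<in> carrier G \<Longrightarrow> grp_comm G a b \<in> carrier G"
  unfolding grp_comm_def by simp

lemma grp_comm_mult:
  assumes "a \<in> carrier G" "b \<in> carrier G"
  shows "grp_comm G a b \<otimes> (b \<otimes> a) = a \<otimes> b"
proof -
  have "inv b \<otimes> (b \<otimes> a) = a" using assms by (simp add: m_assoc[symmetric])
  then show ?thesis using assms unfolding grp_comm_def by (simp add: m_assoc)
qed

lemma grp_comm_eq_one_iff: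
  assumes "a \<in> carrier G" "b \<in> carrier G"
  shows "grp_comm G a b = \<one> \<longleftrightarrow> a \<otimes> b = b \<otimes> a"
  using grp_comm_mult[OF assms] assms grp_comm_carrier[OF assms] by (metis l_one r_cancel_one m_closed)

lemma centralizer_subgroup:
  assumes y: "y \<in> carrier G"
  shows "subgroup (centralizer G y) G"
proof (rule subgroupI)
  fix x assume "x \<in> centralizer G y"
  then have x_carrier: "x \<in> carrier G" and xy: "x \<otimes> y = y \<otimes> x"
    by (auto simp: centralizer_def)
  have "y \<otimes> inv x = inv x \<otimes> (x \<otimes> y) \<otimes> inv x"
    using x_carrier y by (simp add: m_assoc[symmetric])
  also have "\<dots> = inv x \<otimes> y"
    using x_carrier y by (simp add: xy m_assoc)
  finally show "inv x \<in> centralizer G y" using x_carrier by (simp add: centralizer_def)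
next
  fix x z assume "x \<in> centralizer G y" "z \<in> centralizer G y"
  then show "x \<otimes> z \<in> centralizer G y"
    using y by (auto simp: centralizer_def m_assoc) (metis m_assoc)
qed (use y in \<open>auto simp: centralizer_def\<close>)

lemma commutes_with_generate:
  assumes "y \<in> carrier G" "S \<subseteq> centralizer G y" "x \<in> generate G S"
  shows "x \<otimes> y = y \<otimes> x"
  using generate_subgroup_incl[OF assms(2) centralizer_subgroup[OF assms(1)]] assms(3)
  by (auto simp: centralizer_def)

lemma generate_commutative:
  assumes S: "S \<subseteq> carrier G" and comm: "\<And>x y. x \<in> S \<Longrightarrow> y \<in> S \<Longrightarrow> x \<otimes> y = y \<otimes> x"
    and a: "a \<in> generate G S" and b: "b \<in> generate G S"
  shows "a \<otimes> b = b \<otimes> a"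
proof -
  have b_carrier: "b \<in> carrier G" using generate_in_carrier[OF S b] .
  have "s \<otimes> b = b \<otimes> s" if s: "s \<in> S" for s
  proof -
    have "S \<subseteq> centralizer G s" using S comm s by (auto simp: centralizer_def)
    then show ?thesis using commutes_with_generate[OF _ _ b] S s by auto
  qed
  then have "S \<subseteq> centralizer G b" using S by (auto simp: centralizer_def)
  then show ?thesis using commutes_with_generate[OF b_carrier _ a] by simp
qed

text \<open>The centre of a subgroup is a subgroup: it is the intersection of the subgroup with the
  centralizers of its elements.\<close>
lemma sub_center_subgroup:
  assumes H: "subgroup H G"
  shows "subgroup (sub_center G H) G"
proof -
  have "sub_center G H = \<Inter> (insert H (centralizer G ` H))"
    using subgroup.subset[OF H] by (auto simp: sub_center_def centralizer_def)
  moreover have "subgroup (\<Inter> (insert H (centralizer G ` H))) G"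
    using H subgroup.subset[OF H] by (intro subgroups_Inter) (auto intro: centralizer_subgroup)
  ultimately show ?thesis by simp
qed

lemma sub_center_generate_iff:
  assumes S: "S \<subseteq> carrier G" and x: "x \<in> generate G S"
  shows "x \<in> sub_center G (generate G S) \<longleftrightarrow> (\<forall>s \<in> S. x \<otimes> s = s \<otimes> x)"
proof
  assume "\<forall>s \<in> S. x \<otimes> s = s \<otimes> x"
  then have "S \<subseteq> centralizer G x" using S by (auto simp: centralizer_def)
  then show "x \<in> sub_center G (generate G S)"
    using x commutes_with_generate[OF generate_in_carrier[OF S x]]
    by (auto simp: sub_center_def)
qed (auto simp: sub_center_def intro: generate.incl)

end

text \<open>Two non-commuting elements \<open>g\<close>, \<open>h\<close> whose commutator \<open>\<gamma> = (g, h)\<close> commutes with both and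
  has order 2.  The subgroup \<open>H = \<langle>g, h\<rangle>\<close> then has the LC-property and \<open>\<gamma>\<close> as its only
  non-trivial commutator; the proof writes every element of \<open>H\<close> as \<open>z u\<close> with \<open>z\<close> central and
  \<open>u \<in> U = {1, g, h, g h}\<close>.\<close>
locale central_commutator_pair = group G for G :: "('g, 'b) monoid_scheme" (structure) +
  fixes g h :: 'g
  assumes g_carrier: "g \<in> carrier G" and h_carrier: "h \<in> carrier G"
    and noncommuting: "g \<otimes> h \<noteq> h \<otimes> g"
    and commutator_comm_g: "grp_comm G g h \<otimes> g = g \<otimes> grp_comm G g h"
    and commutator_comm_h: "grp_comm G g h \<otimes> h = h \<otimes> grp_comm G g h"
    and commutator_square: "grp_comm G g h \<otimes> grp_comm G g h = \<one>"
begin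

abbreviation "\<gamma> \<equiv> grp_comm G g h"
abbreviation "H \<equiv> generate G {g, h}"
abbreviation "Z \<equiv> sub_center G H"
abbreviation "U \<equiv> {\<one>, g, h, g \<otimes> h}"

lemma gamma_carrier: "\<gamma> \<in> carrier G"
  using grp_comm_carrier[OF g_carrier h_carrier] .

lemma swap: "h \<otimes> g = \<gamma> \<otimes> (g \<otimes> h)"
proof -
  have "\<gamma> \<otimes> (\<gamma> \<otimes> (h \<otimes> g)) = \<gamma> \<otimes> \<gamma> \<otimes> (h \<otimes> g)"
    using gamma_carrier g_carrier h_carrier by (simp add: m_assoc)
  then show ?thesis
    using grp_comm_mult[OF g_carrier h_carrier] commutator_square g_carrier h_carrier by simp
qed

lemma gamma_ne_one: "\<gamma> \<noteq> \<one>"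
  using grp_comm_eq_one_iff[OF g_carrier h_carrier] noncommuting by simp

text \<open>Rewrite rules bringing every product of \<open>g\<close>, \<open>h\<close>, \<open>\<gamma>\<close> into the normal form
  \<open>\<gamma>\<^sup>i g\<^sup>j h\<^sup>k\<close>; they decide all identities between the short words we need.\<close>
lemma normal_form_rules:
  "g \<otimes> \<gamma> = \<gamma> \<otimes> g" "h \<otimes> \<gamma> = \<gamma> \<otimes> h"
  "x \<in> carrier G \<Longrightarrow> h \<otimes> (g \<otimes> x) = \<gamma> \<otimes> (g \<otimes> (h \<otimes> x))"
  "x \<in> carrier G \<Longrightarrow> g \<otimes> (\<gamma> \<otimes> x) = \<gamma> \<otimes> (g \<otimes> x)"
  "x \<in> carrier G \<Longrightarrow> h \<otimes> (\<gamma> \<otimes> x) = \<gamma> \<otimes> (h \<otimes> x)"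
  "x \<in> carrier G \<Longrightarrow> \<gamma> \<otimes> (\<gamma> \<otimes> x) = x"
  using swap commutator_comm_g commutator_comm_h commutator_square
    g_carrier h_carrier gamma_carrier
  by (metis m_assoc m_closed l_one)+

lemmas normalize = normal_form_rules swap gamma_ne_one m_assoc g_carrier h_carrier gamma_carrier

lemma generators_in_H: "g \<in> H" "h \<in> H"
  by (auto intro: generate.incl)

lemma H_subgroup: "subgroup H G"
  using generate_is_subgroup g_carrier h_carrier by simp

lemma H_carrier: "x \<in> H \<Longrightarrow> x \<in> carrier G"
  using subgroup.mem_carrier[OF H_subgroup] .

lemma Z_subgroup: "subgroup Z G"
  using sub_center_subgroup[OF H_subgroup] .

lemma Z_in_H: "z \<in> Z \<Longrightarrow> z \<in> H"
  by (simp add: sub_center_def)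

lemma Z_central: "z \<in> Z \<Longrightarrow> x \<in> H \<Longrightarrow> z \<otimes> x = x \<otimes> z"
  by (simp add: sub_center_def)

lemma Z_iff: "x \<in> H \<Longrightarrow> x \<in> Z \<longleftrightarrow> x \<otimes> g = g \<otimes> x \<and> x \<otimes> h = h \<otimes> x"
  using sub_center_generate_iff[of "{g, h}" x] g_carrier h_carrier by simp

lemma central_elements: "\<gamma> \<in> Z" "g \<otimes> g \<in> Z" "h \<otimes> h \<in> Z" "(g \<otimes> h) \<otimes> (g \<otimes> h) \<in> Z"
proof -
  have "\<gamma> \<in> H" "g \<otimes> g \<in> H" "h \<otimes> h \<in> H" "(g \<otimes> h) \<otimes> (g \<otimes> h) \<in> H"
    unfolding grp_comm_def using generators_in_H H_subgroup
    by (auto intro!: subgroup.m_closed subgroup.m_inv_closed)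
  then show "\<gamma> \<in> Z" "g \<otimes> g \<in> Z" "h \<otimes> h \<in> Z" "(g \<otimes> h) \<otimes> (g \<otimes> h) \<in> Z"
    by (simp_all add: Z_iff normalize)
qed

lemma U_in_H: "u \<in> U \<Longrightarrow> u \<in> H"
  using generators_in_H subgroup.m_closed[OF H_subgroup] subgroup.one_closed[OF H_subgroup] by auto

lemma Z_mult: "z \<in> Z \<Longrightarrow> z' \<in> Z \<Longrightarrow> z \<otimes> z' \<in> Z"
  using subgroup.m_closed[OF Z_subgroup] .

lemma Z_carrier: "z \<in> Z \<Longrightarrow> z \<in> carrier G"
  using Z_in_H H_carrier by blast

lemma U_carrier: "u \<in> U \<Longrightarrow> u \<in> carrier G"
  using U_in_H H_carrier by blast

lemma U_mult:
  assumes "u \<in> U" "v \<in> U"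
  shows "\<exists>z\<in>Z. \<exists>w\<in>U. u \<otimes> v = z \<otimes> w"
proof -
  have central: "\<one> \<in> Z" "g \<otimes> g \<in> Z" "h \<otimes> h \<in> Z" "(g \<otimes> h) \<otimes> (g \<otimes> h) \<in> Z" "\<gamma> \<in> Z"
    "\<gamma> \<otimes> (g \<otimes> g) \<in> Z" "\<gamma> \<otimes> (h \<otimes> h) \<in> Z"
    using central_elements Z_mult subgroup.one_closed[OF Z_subgroup] by auto
  have table: "\<one> \<otimes> v = \<one> \<otimes> v" "u \<otimes> \<one> = \<one> \<otimes> u"
    "g \<otimes> g = (g \<otimes> g) \<otimes> \<one>" "g \<otimes> h = \<one> \<otimes> (g \<otimes> h)" "g \<otimes> (g \<otimes> h) = (g \<otimes> g) \<otimes> h"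
    "h \<otimes> g = \<gamma> \<otimes> (g \<otimes> h)" "h \<otimes> h = (h \<otimes> h) \<otimes> \<one>" "h \<otimes> (g \<otimes> h) = (\<gamma> \<otimes> (h \<otimes> h)) \<otimes> g"
    "(g \<otimes> h) \<otimes> g = (\<gamma> \<otimes> (g \<otimes> g)) \<otimes> h" "(g \<otimes> h) \<otimes> h = (h \<otimes> h) \<otimes> g"
    "(g \<otimes> h) \<otimes> (g \<otimes> h) = ((g \<otimes> h) \<otimes> (g \<otimes> h)) \<otimes> \<one>"
    using assms by (auto simp: normalize)
  show ?thesis
    using assms central table by (simp only: insert_iff empty_iff) (elim disjE; simp only:; blast)
qed

lemma mult_central_factors:
  assumes "z \<in> Z" "z' \<in> Z" "u \<in> H" "u' \<in> H"
  shows "(z \<otimes> u) \<otimes> (z' \<otimes> u') = (z \<otimes> z') \<otimes> (u \<otimes> u')"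
proof -
  have carrier: "z \<in> carrier G" "z' \<in> carrier G" "u \<in> carrier G" "u' \<in> carrier G"
    using assms Z_carrier H_carrier by auto
  have "(z \<otimes> u) \<otimes> (z' \<otimes> u') = z \<otimes> ((u \<otimes> z') \<otimes> u')" using carrier by (simp add: m_assoc)
  also have "\<dots> = z \<otimes> ((z' \<otimes> u) \<otimes> u')" using Z_central[OF assms(2,3)] by simp
  also have "\<dots> = (z \<otimes> z') \<otimes> (u \<otimes> u')" using carrier by (simp add: m_assoc)
  finally show ?thesis .
qed

lemma coset_decomposition:
  assumes "x \<in> H"
  shows "\<exists>z\<in>Z. \<exists>u\<in>U. x = z \<otimes> u"
  using assms
proof (induction rule: generate.induct)
  case one
  show ?case using subgroup.one_closed[OF Z_subgroup] by force
next
  case (incl s)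
  then show ?case using subgroup.one_closed[OF Z_subgroup] g_carrier h_carrier by force
next
  case (inv s)
  then have s: "s \<in> carrier G" "s \<otimes> s \<in> Z" "s \<in> U"
    using central_elements g_carrier h_carrier by auto
  then have "inv s = inv (s \<otimes> s) \<otimes> s"
    by (simp add: inv_mult_group m_assoc)
  then show ?case using s subgroup.m_inv_closed[OF Z_subgroup] by blast
next
  case (eng a b)
  obtain z u z' u' where "z \<in> Z" "u \<in> U" "a = z \<otimes> u" "z' \<in> Z" "u' \<in> U" "b = z' \<otimes> u'"
    using eng.IH by blast
  note factors = this
  obtain z'' w where "z'' \<in> Z" "w \<in> U" "u \<otimes> u' = z'' \<otimes> w"
    using U_mult[OF \<open>u \<in> U\<close> \<open>u' \<in> U\<close>] by blast
  have "a \<otimes> b = (z \<otimes> z') \<otimes> (u \<otimes> u')"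
    using factors U_in_H mult_central_factors[of z z' u u'] by simp
  also have "\<dots> = (z \<otimes> z' \<otimes> z'') \<otimes> w"
    using factors \<open>z'' \<in> Z\<close> \<open>w \<in> U\<close> \<open>u \<otimes> u' = z'' \<otimes> w\<close> Z_carrier U_carrier
    by (simp add: m_assoc)
  finally show ?case using factors \<open>z'' \<in> Z\<close> \<open>w \<in> U\<close> Z_mult by blast
qed

lemma U_commutation: "u \<in> U \<Longrightarrow> v \<in> U \<Longrightarrow> v \<otimes> u = u \<otimes> v \<or> v \<otimes> u = \<gamma> \<otimes> (u \<otimes> v)"
  by (auto simp: normalize)

lemma U_commuting:
  "u \<in> U \<Longrightarrow> v \<in> U \<Longrightarrow> u \<otimes> v = v \<otimes> u \<Longrightarrow> u = \<one> \<or> v = \<one> \<or> u \<otimes> v \<in> Z"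
  using central_elements by (auto simp: normalize)

lemma decomposed_products:
  assumes "a \<in> H" "b \<in> H"
  obtains z u z' u' where "z \<in> Z" "u \<in> U" "z' \<in> Z" "u' \<in> U"
    "a = z \<otimes> u" "b = z' \<otimes> u'"
    "a \<otimes> b = (z \<otimes> z') \<otimes> (u \<otimes> u')" "b \<otimes> a = (z \<otimes> z') \<otimes> (u' \<otimes> u)"
proof -
  obtain z u z' u' where factors: "z \<in> Z" "u \<in> U" "a = z \<otimes> u" "z' \<in> Z" "u' \<in> U" "b = z' \<otimes> u'"
    using coset_decomposition assms by meson
  have "z' \<otimes> z = z \<otimes> z'" using Z_central factors Z_in_H by auto
  then show ?thesis
    using that factors U_in_H mult_central_factors[of z z' u u'] mult_central_factors[of z' z u' u]
    by simp
qed

lemma H_commutation: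
  assumes "a \<in> H" "b \<in> H"
  shows "b \<otimes> a = a \<otimes> b \<or> b \<otimes> a = \<gamma> \<otimes> (a \<otimes> b)"
proof -
  obtain z u z' u' where factors: "z \<in> Z" "u \<in> U" "z' \<in> Z" "u' \<in> U"
    and ab: "a \<otimes> b = (z \<otimes> z') \<otimes> (u \<otimes> u')" and ba: "b \<otimes> a = (z \<otimes> z') \<otimes> (u' \<otimes> u)"
    using decomposed_products[OF assms] by metis
  have zz: "z \<otimes> z' \<in> Z" "z \<otimes> z' \<in> carrier G" using factors Z_mult Z_carrier by auto
  have "(z \<otimes> z') \<otimes> (\<gamma> \<otimes> (u \<otimes> u')) = \<gamma> \<otimes> ((z \<otimes> z') \<otimes> (u \<otimes> u'))"
    using Z_central[OF zz(1)] central_elements Z_in_H zz factors U_carrier gamma_carrier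
    by (metis m_assoc m_closed)
  then show ?thesis
    using U_commutation[OF factors(2,4)] ab ba by auto
qed

lemma H_commuting:
  assumes "a \<in> H" "b \<in> H" "a \<otimes> b = b \<otimes> a"
  shows "a \<in> Z \<or> b \<in> Z \<or> a \<otimes> b \<in> Z"
proof -
  obtain z u z' u' where factors: "z \<in> Z" "u \<in> U" "z' \<in> Z" "u' \<in> U" "a = z \<otimes> u" "b = z' \<otimes> u'"
    and ab: "a \<otimes> b = (z \<otimes> z') \<otimes> (u \<otimes> u')" and ba: "b \<otimes> a = (z \<otimes> z') \<otimes> (u' \<otimes> u)"
    using decomposed_products[OF assms(1,2)] by metis
  have "z \<otimes> z' \<in> Z" using factors Z_mult by auto
  have "u \<otimes> u' = u' \<otimes> u"
    using ab ba assms(3) factors Z_carrier U_carrier \<open>z \<otimes> z' \<in> Z\<close> by (metis l_cancel m_closed)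
  then have "u = \<one> \<or> u' = \<one> \<or> u \<otimes> u' \<in> Z" using U_commuting factors by blast
  then show ?thesis
  proof (elim disjE)
    assume "u \<otimes> u' \<in> Z"
    then show ?thesis using ab Z_mult \<open>z \<otimes> z' \<in> Z\<close> by auto
  qed (use factors Z_carrier in auto)
qed

theorem LC: "LC_property G H"
  unfolding LC_property_def
proof (intro ballI iffI)
  fix a b assume "a \<in> H" "b \<in> H"
  then show "a \<otimes> b = b \<otimes> a \<Longrightarrow> a \<in> Z \<or> b \<in> Z \<or> a \<otimes> b \<in> Z"
    using H_commuting by blast
  assume "a \<in> Z \<or> b \<in> Z \<or> a \<otimes> b \<in> Z"
  then show "a \<otimes> b = b \<otimes> a"
  proof (elim disjE)
    assume "a \<otimes> b \<in> Z"
    then have "(a \<otimes> b) \<otimes> a = a \<otimes> (a \<otimes> b)" using Z_central \<open>a \<in> H\<close> by blast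
    then show ?thesis using \<open>a \<in> H\<close> \<open>b \<in> H\<close> H_carrier by (simp add: m_assoc)
  qed (use Z_central \<open>a \<in> H\<close> \<open>b \<in> H\<close> in auto)
qed

theorem unique_commutator: "unique_nontrivial_commutator G H"
  unfolding unique_nontrivial_commutator_def
proof (rule ex1I[of _ \<gamma>])
  show "\<gamma> \<in> {grp_comm G a b |a b. a \<in> H \<and> b \<in> H} \<and> \<gamma> \<noteq> \<one>"
    using generators_in_H gamma_ne_one by blast
  fix d assume "d \<in> {grp_comm G a b |a b. a \<in> H \<and> b \<in> H} \<and> d \<noteq> \<one>"
  then obtain a b where ab: "a \<in> H" "b \<in> H" "d = grp_comm G a b" "d \<noteq> \<one>" by blast
  have carrier: "a \<in> carrier G" "b \<in> carrier G" "d \<in> carrier G"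
    using ab H_carrier grp_comm_carrier by auto
  have "b \<otimes> a \<noteq> a \<otimes> b" using grp_comm_eq_one_iff carrier ab by auto
  then have "\<gamma> \<otimes> (a \<otimes> b) = b \<otimes> a" using H_commutation ab by metis
  then have "(d \<otimes> \<gamma>) \<otimes> (a \<otimes> b) = \<one> \<otimes> (a \<otimes> b)"
    using grp_comm_mult[of a b] ab carrier gamma_carrier by (simp add: m_assoc)
  then have "d \<otimes> \<gamma> = \<gamma> \<otimes> \<gamma>"
    using carrier gamma_carrier commutator_square by (metis m_closed r_cancel)
  then show "d = \<gamma>" using carrier gamma_carrier by (metis r_cancel)
qed

end

definition gr_point :: "'r::comm_ring_1 \<Rightarrow> 'g \<Rightarrow> 'g \<Rightarrow> 'r" where
  "gr_point a p = (\<lambda>x. if x = p then a else 0)"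

definition gr_diff :: "'g \<Rightarrow> 'g \<Rightarrow> 'g \<Rightarrow> 'r::comm_ring_1" where
  "gr_diff p q = (\<lambda>x. of_bool (x = p) - of_bool (x = q))"

lemma gr_mult_expand:
  fixes \<alpha> \<beta> :: "'g \<Rightarrow> 'r::comm_ring_1"
  assumes "finite A" "A \<subseteq> carrier G" "finite B" "B \<subseteq> carrier G"
    and "\<And>y. \<alpha> y \<noteq> 0 \<Longrightarrow> y \<in> A" "\<And>z. \<beta> z \<noteq> 0 \<Longrightarrow> z \<in> B"
  shows "gr_mult G \<alpha> \<beta> x = (\<Sum>y\<in>A. \<Sum>z\<in>B. if y \<otimes>\<^bsub>G\<^esub> z = x then \<alpha> y * \<beta> z else 0)"
proof -
  let ?S = "{(y, z). y \<in> carrier G \<and> z \<in> carrier G \<and> \<alpha> y \<noteq> 0 \<and> \<beta> z \<noteq> 0 \<and> y \<otimes>\<^bsub>G\<^esub> z = x}"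
  let ?f = "\<lambda>(y, z). if y \<otimes>\<^bsub>G\<^esub> z = x then \<alpha> y * \<beta> z else 0"
  have "gr_mult G \<alpha> \<beta> x = sum ?f ?S"
    unfolding gr_mult_def by (rule sum.cong) auto
  also have "\<dots> = sum ?f (A \<times> B)"
    by (rule sum.mono_neutral_left) (use assms in \<open>auto split: if_splits\<close>)
  finally show ?thesis
    by (simp add: sum.cartesian_product)
qed

lemma gr_mult_point_diff:
  assumes "p \<in> carrier G" "q \<in> carrier G" "q' \<in> carrier G" "q \<noteq> q'"
  shows "gr_mult G (gr_point a p) (gr_diff q q') x
           = a * (of_bool (p \<otimes>\<^bsub>G\<^esub> q = x) - of_bool (p \<otimes>\<^bsub>G\<^esub> q' = x))"
  by (subst gr_mult_expand[where A = "{p}" and B = "{q, q'}"])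
     (use assms in \<open>auto simp: gr_point_def gr_diff_def algebra_simps split: if_splits\<close>)

lemma gr_mult_diff_point:
  assumes "p \<in> carrier G" "q \<in> carrier G" "q' \<in> carrier G" "q \<noteq> q'"
  shows "gr_mult G (gr_diff q q') (gr_point a p) x
           = a * (of_bool (q \<otimes>\<^bsub>G\<^esub> p = x) - of_bool (q' \<otimes>\<^bsub>G\<^esub> p = x))"
  by (subst gr_mult_expand[where A = "{q, q'}" and B = "{p}"])
     (use assms in \<open>auto simp: gr_point_def gr_diff_def algebra_simps split: if_splits\<close>)

lemma gr_mult_diff_diff:
  assumes "p \<in> carrier G" "p' \<in> carrier G" "q \<in> carrier G" "q' \<in> carrier G" "p \<noteq> p'" "q \<noteq> q'"
  shows "gr_mult G (gr_diff p p') (gr_diff q q') x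
           = of_bool (p \<otimes>\<^bsub>G\<^esub> q = x) - of_bool (p \<otimes>\<^bsub>G\<^esub> q' = x)
             - of_bool (p' \<otimes>\<^bsub>G\<^esub> q = x) + (of_bool (p' \<otimes>\<^bsub>G\<^esub> q' = x) :: 'r::comm_ring_1)"
  by (subst gr_mult_expand[where A = "{p, p'}" and B = "{q, q'}"])
     (use assms in \<open>auto simp: gr_diff_def\<close>)

lemma involution_closed:
  "group_involution G \<phi> \<Longrightarrow> x \<in> carrier G \<Longrightarrow> \<phi> x \<in> carrier G"
  and involution_twice:
  "group_involution G \<phi> \<Longrightarrow> x \<in> carrier G \<Longrightarrow> \<phi> (\<phi> x) = x"
  and involution_mult:
  "group_involution G \<phi> \<Longrightarrow> x \<in> carrier G \<Longrightarrow> y \<in> carrier G \<Longrightarrow> \<phi> (x \<otimes>\<^bsub>G\<^esub> y) = \<phi> y \<otimes>\<^bsub>G\<^esub> \<phi> x"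
  unfolding group_involution_def by blast+

text \<open>The two families of skew-symmetric elements used: \<open>p - \<phi>(p)\<close>, and \<open>a p\<close> for a fixed
  point \<open>p\<close> and \<open>2 a = 0\<close> (then \<open>-a = a\<close>).\<close>
lemma gr_diff_skew:
  assumes inv: "group_involution G \<phi>" and p: "p \<in> carrier G"
  shows "(gr_diff p (\<phi> p) :: 'g \<Rightarrow> 'r::comm_ring_1) \<in> gr_skew G \<phi>"
proof -
  have "(gr_diff p (\<phi> p) :: 'g \<Rightarrow> 'r) \<in> group_ring G"
    unfolding group_ring_def gr_diff_def
    by (auto intro: finite_subset[of _ "{p, \<phi> p}"] simp: p involution_closed[OF inv p])
  moreover have "x \<in> carrier G \<Longrightarrow> (\<phi> x = p) = (x = \<phi> p) \<and> (\<phi> x = \<phi> p) = (x = p)" for x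
    using inv p by (metis involution_twice)
  ultimately show ?thesis
    using p involution_closed[OF inv p]
    by (auto simp: gr_skew_def gr_inv_ext_def gr_diff_def group_ring_def intro!: ext)
qed

lemma gr_point_skew:
  assumes inv: "group_involution G \<phi>" and p: "p \<in> carrier G" "\<phi> p = p"
    and two: "2 * a = (0::'r::comm_ring_1)"
  shows "gr_point a p \<in> gr_skew G \<phi>"
proof -
  have "gr_point a p \<in> group_ring G"
    unfolding group_ring_def gr_point_def
    by (auto intro: finite_subset[of _ "{p}"] simp: p)
  moreover have "- a = a"
    using two by (metis add_eq_0_iff mult_2)
  moreover have "x \<in> carrier G \<Longrightarrow> (\<phi> x = p) = (x = p)" for x
    using inv p by (metis involution_twice)
  ultimately show ?thesis
    using p by (auto simp: gr_skew_def gr_inv_ext_def gr_point_def group_ring_def intro!: ext)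
qed

locale skew_commutative = group G for G :: "('g, 'b) monoid_scheme" (structure) +
  fixes \<phi> :: "'g \<Rightarrow> 'g" and r :: "'r::comm_ring_1"
  assumes involution: "group_involution G \<phi>"
    and skew_commute: "\<And>\<alpha> \<beta>. \<alpha> \<in> gr_skew G \<phi> \<Longrightarrow> \<beta> \<in> gr_skew G \<phi> \<Longrightarrow>
                         gr_mult G \<alpha> \<beta> = gr_mult G \<beta> (\<alpha> :: 'g \<Rightarrow> 'r)"
    and char_not_two: "CHAR('r) \<noteq> 2"
    and r_nonzero: "r \<noteq> 0" and r_two_torsion: "2 * r = 0"
begin

lemma phi_closed: "x \<in> carrier G \<Longrightarrow> \<phi> x \<in> carrier G"
  using involution_closed[OF involution] .

lemma phi_mult: "x \<in> carrier G \<Longrightarrow> y \<in> carrier G \<Longrightarrow> \<phi> (x \<otimes> y) = \<phi> y \<otimes> \<phi> x"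
  using involution_mult[OF involution] .

lemma fixed_elems_iff: "x \<in> carrier G \<Longrightarrow> x \<in> fixed_elems G \<phi> \<longleftrightarrow> \<phi> x = x"
  by (simp add: fixed_elems_def)

text \<open>Since \<open>R\<^sub>2 \<noteq> 0\<close>, neither \<open>2\<close> nor \<open>3\<close> vanishes in \<open>R\<close> (\<open>3 r = r\<close>).\<close>
lemma two_nonzero_coeff: "(2::'r) \<noteq> 0"
  using two_nonzero[OF char_not_two] r_nonzero by (metis mult_1 mult_zero_left)

lemma three_nonzero: "(3::'r) \<noteq> 0"
proof
  assume three: "(3::'r) = 0"
  have "r = 3 * r - 2 * r" by (simp add: algebra_simps)
  also have "\<dots> = 0" by (simp only: three r_two_torsion) simp
  finally show False using r_nonzero by simp
qed

text \<open>Part 1: a fixed \<open>p\<close> and a non-fixed \<open>q\<close> that do not commute satisfy \<open>p q = \<phi>(q) p\<close> and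
  \<open>q p = p \<phi>(q)\<close>, read off from the coefficients of \<open>p q\<close> and \<open>q p\<close> in
  \<open>(r p)(q - \<phi> q) = (q - \<phi> q)(r p)\<close>.\<close>
lemma fixed_noncommuting:
  assumes p: "p \<in> carrier G" "\<phi> p = p" and q: "q \<in> carrier G" "\<phi> q \<noteq> q"
    and pq: "p \<otimes> q \<noteq> q \<otimes> p"
  shows "p \<otimes> q = \<phi> q \<otimes> p" "q \<otimes> p = p \<otimes> \<phi> q"
proof -
  have q': "\<phi> q \<in> carrier G" using phi_closed[OF q(1)] .
  have "gr_mult G (gr_point r p) (gr_diff q (\<phi> q)) x = gr_mult G (gr_diff q (\<phi> q)) (gr_point r p) x" for x
    using skew_commute[OF gr_point_skew[OF involution p r_two_torsion] gr_diff_skew[OF involution q(1)]]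
    by simp
  then have coeff: "r * (of_bool (p \<otimes> q = x) - of_bool (p \<otimes> \<phi> q = x))
                  = r * (of_bool (q \<otimes> p = x) - of_bool (\<phi> q \<otimes> p = x))" for x
    using p q q' by (simp add: gr_mult_point_diff gr_mult_diff_point)
  have "p \<otimes> \<phi> q \<noteq> p \<otimes> q" "\<phi> q \<otimes> p \<noteq> q \<otimes> p" using p q q' by simp_all
  then show "p \<otimes> q = \<phi> q \<otimes> p" "q \<otimes> p = p \<otimes> \<phi> q"
    using coeff[of "p \<otimes> q"] coeff[of "q \<otimes> p"] pq r_nonzero by (auto simp: of_bool_def split: if_splits)
qed

text \<open>Otherwise part 1
  for the fixed element \<open>g h\<close> and \<open>g\<close> gives \<open>h \<phi>(g) = g h = \<phi>(g h) = \<phi>(h) \<phi>(g)\<close>, so \<open>\<phi>(h) = h\<close>.\<close>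
lemma product_not_fixed:
  assumes g: "g \<in> carrier G" "\<phi> g \<noteq> g" and h: "h \<in> carrier G" "\<phi> h \<noteq> h"
    and gh: "g \<otimes> h \<noteq> h \<otimes> g"
  shows "\<phi> (g \<otimes> h) \<noteq> g \<otimes> h"
proof
  assume fixed: "\<phi> (g \<otimes> h) = g \<otimes> h"
  have g': "\<phi> g \<in> carrier G" and h': "\<phi> h \<in> carrier G" using g h phi_closed by auto
  have "(g \<otimes> h) \<otimes> g \<noteq> g \<otimes> (g \<otimes> h)" using g h gh by (simp add: m_assoc)
  then have "g \<otimes> (g \<otimes> h) = (g \<otimes> h) \<otimes> \<phi> g"
    using fixed_noncommuting(2)[of "g \<otimes> h" g] g h fixed by simp
  then have "h \<otimes> \<phi> g = g \<otimes> h" using g h g' by (simp add: m_assoc)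
  also have "\<dots> = \<phi> h \<otimes> \<phi> g" using fixed phi_mult g h by simp
  finally show False using h h' g' by simp
qed

text \<open>Part 3, ring-theoretic half: comparing the coefficients of \<open>g h\<close> in
  \<open>(g - \<phi> g)(h - \<phi> h) = (h - \<phi> h)(g - \<phi> g)\<close> yields three relations and \<open>4 = 0\<close>.\<close>
lemma nonfixed_noncommuting:
  assumes g: "g \<in> carrier G" "\<phi> g \<noteq> g" and h: "h \<in> carrier G" "\<phi> h \<noteq> h"
    and gh: "g \<otimes> h \<noteq> h \<otimes> g"
  shows "\<phi> g \<otimes> \<phi> h = g \<otimes> h" "h \<otimes> \<phi> g = g \<otimes> h" "\<phi> h \<otimes> g = g \<otimes> h" "(4::'r) = 0"
proof -
  have g': "\<phi> g \<in> carrier G" and h': "\<phi> h \<in> carrier G" using g h phi_closed by auto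
  have "gr_mult G (gr_diff g (\<phi> g)) (gr_diff h (\<phi> h)) x
          = gr_mult G (gr_diff h (\<phi> h)) (gr_diff g (\<phi> g) :: 'g \<Rightarrow> 'r) x" for x
    using skew_commute[OF gr_diff_skew[OF involution g(1)] gr_diff_skew[OF involution h(1)]] by simp
  then have coeff: "of_bool (g \<otimes> h = x) - of_bool (g \<otimes> \<phi> h = x)
                    - of_bool (\<phi> g \<otimes> h = x) + of_bool (\<phi> g \<otimes> \<phi> h = x)
                  = of_bool (h \<otimes> g = x) - of_bool (h \<otimes> \<phi> g = x)
                    - of_bool (\<phi> h \<otimes> g = x) + (of_bool (\<phi> h \<otimes> \<phi> g = x) :: 'r)" for x
    using g h g' h' by (simp add: gr_mult_diff_diff)
  have "g \<otimes> \<phi> h \<noteq> g \<otimes> h" "\<phi> g \<otimes> h \<noteq> g \<otimes> h" using g h g' h' by simp_all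
  moreover have "\<phi> h \<otimes> \<phi> g \<noteq> g \<otimes> h"
    using product_not_fixed[OF g h gh] phi_mult g h by simp
  ultimately have "1 + of_bool (\<phi> g \<otimes> \<phi> h = g \<otimes> h)
      = - of_bool (h \<otimes> \<phi> g = g \<otimes> h) - (of_bool (\<phi> h \<otimes> g = g \<otimes> h) :: 'r)"
    using coeff[of "g \<otimes> h"] gh by simp
  then show "\<phi> g \<otimes> \<phi> h = g \<otimes> h" "h \<otimes> \<phi> g = g \<otimes> h" "\<phi> h \<otimes> g = g \<otimes> h" "(4::'r) = 0"
    using of_bool_equation[OF two_nonzero_coeff three_nonzero] by blast+
qed

text \<open>Part 3, group-theoretic half: the relations for \<open>(g, h)\<close> and \<open>(h, g)\<close> say that
  \<open>\<phi>(g) = c g\<close>, \<open>\<phi>(h) = c h\<close> for the commutator \<open>c = (g, h)\<close>, and that \<open>c\<close> is a central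
  involution of \<open>\<langle>g, h\<rangle>\<close>.\<close>
lemma nonfixed_pair:
  assumes g: "g \<in> carrier G" "\<phi> g \<noteq> g" and h: "h \<in> carrier G" "\<phi> h \<noteq> h"
    and gh: "g \<otimes> h \<noteq> h \<otimes> g"
  shows "\<phi> g = grp_comm G g h \<otimes> g" "\<phi> h = grp_comm G g h \<otimes> h"
    "central_commutator_pair G g h"
proof -
  define c where "c = grp_comm G g h"
  have carrier: "c \<in> carrier G" "\<phi> g \<in> carrier G" "\<phi> h \<in> carrier G"
    using g h phi_closed grp_comm_carrier c_def by auto
  have c: "c \<otimes> (h \<otimes> g) = g \<otimes> h" using grp_comm_mult g h c_def by simp
  note gh_rel = nonfixed_noncommuting[OF g h gh]
    and hg_rel = nonfixed_noncommuting[OF h g gh[symmetric]]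
  have "\<phi> h \<otimes> g = (c \<otimes> h) \<otimes> g" using gh_rel(3) c carrier g h by (simp add: m_assoc)
  then show phi_h: "\<phi> h = c \<otimes> h" using carrier g h by (metis m_closed r_cancel)
  have "\<phi> g \<otimes> \<phi> h = (c \<otimes> g) \<otimes> \<phi> h" using gh_rel(1) hg_rel(2) c carrier g by (simp add: m_assoc)
  then show phi_g: "\<phi> g = c \<otimes> g" using carrier g h by (metis m_closed r_cancel)
  have "(c \<otimes> g) \<otimes> h = (g \<otimes> c) \<otimes> h"
    using hg_rel(3) hg_rel(2) phi_g phi_h carrier g h by (simp add: m_assoc)
  then have comm_g: "c \<otimes> g = g \<otimes> c" using carrier g h by (metis m_closed r_cancel)
  have "(h \<otimes> c) \<otimes> g = (c \<otimes> h) \<otimes> g" using gh_rel(2) phi_g c carrier g h by (simp add: m_assoc)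
  then have comm_h: "c \<otimes> h = h \<otimes> c" using carrier g h by (metis m_closed r_cancel)
  have "(c \<otimes> c) \<otimes> (g \<otimes> h) = \<one> \<otimes> (g \<otimes> h)"
    using hg_rel(3) phi_g c carrier g h by (simp add: m_assoc)
  then have "c \<otimes> c = \<one>" using carrier g h by (metis m_closed r_cancel one_closed)
  then show "central_commutator_pair G g h"
    using comm_g comm_h g h gh c_def by unfold_locales auto
qed

lemma nonfixed_generate_commutative:
  assumes "CHAR('r) \<noteq> 4"
    and "a \<in> generate G (carrier G - fixed_elems G \<phi>)" "b \<in> generate G (carrier G - fixed_elems G \<phi>)"
  shows "a \<otimes> b = b \<otimes> a"
proof (rule generate_commutative[OF _ _ assms(2,3)])
  fix x y assume "x \<in> carrier G - fixed_elems G \<phi>" "y \<in> carrier G - fixed_elems G \<phi>"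
  then show "x \<otimes> y = y \<otimes> x"
    using nonfixed_noncommuting(4)[of x y] char_four[OF _ two_nonzero_coeff] assms(1) fixed_elems_iff
    by auto
qed auto

end

theorem lemma2p4:
  fixes G :: "'g monoid" and \<phi> :: "'g \<Rightarrow> 'g" and g h :: 'g
  assumes "group G"
    and "CHAR('r::comm_ring_1) \<noteq> 2"
    and "\<exists>r::'r. r \<noteq> 0 \<and> 2 * r = 0"
    and "group_involution G \<phi>"
    and "\<forall>\<alpha> \<in> (gr_skew G \<phi> :: ('g \<Rightarrow> 'r) set). \<forall>\<beta> \<in> gr_skew G \<phi>. gr_mult G \<alpha> \<beta> = gr_mult G \<beta> \<alpha>"
    and "g \<in> carrier G" and "h \<in> carrier G"
    and "grp_comm G g h \<noteq> \<one>\<^bsub>G\<^esub>"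
  shows "(g \<in> fixed_elems G \<phi> \<and> h \<notin> fixed_elems G \<phi> \<longrightarrow>
            g \<otimes>\<^bsub>G\<^esub> h = \<phi> h \<otimes>\<^bsub>G\<^esub> g \<and> h \<otimes>\<^bsub>G\<^esub> g = g \<otimes>\<^bsub>G\<^esub> \<phi> h)
       \<and> (g \<notin> fixed_elems G \<phi> \<and> h \<notin> fixed_elems G \<phi> \<longrightarrow>
            g \<otimes>\<^bsub>G\<^esub> h \<notin> fixed_elems G \<phi>)
       \<and> (g \<notin> fixed_elems G \<phi> \<and> h \<notin> fixed_elems G \<phi> \<longrightarrow>
            CHAR('r) = 4
            \<and> LC_property G (generate G {g, h})
            \<and> unique_nontrivial_commutator G (generate G {g, h})
            \<and> \<phi> g = grp_comm G g h \<otimes>\<^bsub>G\<^esub> g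
            \<and> \<phi> h = grp_comm G g h \<otimes>\<^bsub>G\<^esub> h)
       \<and> (CHAR('r) \<noteq> 4 \<longrightarrow>
            (\<forall>a \<in> generate G (carrier G - fixed_elems G \<phi>).
             \<forall>b \<in> generate G (carrier G - fixed_elems G \<phi>). a \<otimes>\<^bsub>G\<^esub> b = b \<otimes>\<^bsub>G\<^esub> a))"
proof -
  obtain r :: 'r where "r \<noteq> 0" "2 * r = 0" using assms(3) by blast
  then interpret skew_commutative G \<phi> r
    using assms(1,2,4,5) by (auto simp: skew_commutative_def skew_commutative_axioms_def)
  have g: "g \<in> carrier G" and h: "h \<in> carrier G" using assms(6,7) .
  have gh: "g \<otimes>\<^bsub>G\<^esub> h \<noteq> h \<otimes>\<^bsub>G\<^esub> g" using grp_comm_eq_one_iff[OF g h] assms(8) by simp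
  show ?thesis
  proof (intro conjI impI ballI)
    assume "g \<in> fixed_elems G \<phi> \<and> h \<notin> fixed_elems G \<phi>"
    then show "g \<otimes>\<^bsub>G\<^esub> h = \<phi> h \<otimes>\<^bsub>G\<^esub> g" "h \<otimes>\<^bsub>G\<^esub> g = g \<otimes>\<^bsub>G\<^esub> \<phi> h"
      using fixed_noncommuting[OF g _ h _ gh] fixed_elems_iff g h by auto
  next
    assume "g \<notin> fixed_elems G \<phi> \<and> h \<notin> fixed_elems G \<phi>"
    then have g': "\<phi> g \<noteq> g" and h': "\<phi> h \<noteq> h" using fixed_elems_iff g h by auto
    interpret pair: central_commutator_pair G g h using nonfixed_pair(3)[OF g g' h h' gh] .
    show "g \<otimes>\<^bsub>G\<^esub> h \<notin> fixed_elems G \<phi>" using product_not_fixed[OF g g' h h' gh] by (simp add: fixed_elems_def)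
    show "CHAR('r) = 4" using char_four[OF nonfixed_noncommuting(4)[OF g g' h h' gh] two_nonzero_coeff] .
    show "LC_property G (generate G {g, h})" using pair.LC .
    show "unique_nontrivial_commutator G (generate G {g, h})" using pair.unique_commutator .
    show "\<phi> g = grp_comm G g h \<otimes>\<^bsub>G\<^esub> g" "\<phi> h = grp_comm G g h \<otimes>\<^bsub>G\<^esub> h"
      using nonfixed_pair(1,2)[OF g g' h h' gh] .
  qed (fact nonfixed_generate_commutative)
qed

end
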